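(* Let $M\ge1$. There exist two languages $L_1,L_2$ and an enumeration $x_{1:\infty}$ which, for each $K\in\{L_1,L_2\}$, is an $M$-bounded displacement enumeration with respect to $K$ and an enumeration of $K$ with $o(1)$-noise, such that any set-based generator that generates in the limit from the target $K$ (for either possible target $K\in\{L_1,L_2\}$) on this enumeration achieves set-based upper density at most $1/M$ (for some choice of the target).
   Context: The universe is $U=\mathbb{N}$ with its natural order; a language is an infinite subset of $U$ with canonical enumeration $\ell_1<\ell_2<\cdots$. For $A,B\subseteq\mathbb{N}$ with $B=\{b_1<b_2<\cdots\}$, $\mu_{\rm low}(A,B)=\liminf_n\frac1n|A\cap\{b_1,\dots,b_n\}|$. For $x\in U$, $\sigma(x,L)=j$ if $x=\ell_j$ and $0$ if $x\notin L$; $x_{1:\infty}$ is an $M$-bounded displacement enumeration with respect to $L$ if there is $n^\star$ with $\sigma(x_n,L)\le Mn$ for all $n\ge n^\star$. An enumeration of $L$ with $o(1)$-noise is a sequence of distinct elements listing every element of $L$ with $\frac1n|\{t\le n:x_t\notin L\}|\to0$. A set-based generator outputs, from $x_1,\dots,x_n$ and knowledge of $\{L_1,L_2\}$ (not $K$), a set $A_n\subseteq U\setminus\{x_1,\dots,x_n\}$; it generates in the limit from $K$ if $A_n\subseteq K$ for all large $n$; its set-based upper density is $\limsup_n\mu_{\rm low}(A_n,K)$. *)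

theory Defs
  imports Complex_Main "HOL-Library.Infinite_Set" "HOL-Library.Liminf_Limsup" "HOL-Library.Extended_Real"
begin

(* Universe U = nat. Enumerations x :: nat => nat are 1-indexed: x 1, x 2, ...; x 0 is ignored. *)

definition language :: "nat set \<Rightarrow> bool" where
  "language L \<longleftrightarrow> infinite L"

definition canon :: "nat set \<Rightarrow> nat \<Rightarrow> nat" where
  "canon L j = enumerate L (j - 1)"

definition sigma :: "nat \<Rightarrow> nat set \<Rightarrow> nat" where
  "sigma y L = (if y \<in> L then (THE j. j \<ge> 1 \<and> canon L j = y) else 0)"

definition mu_low :: "nat set \<Rightarrow> nat set \<Rightarrow> ereal" where
  "mu_low A B = liminf (\<lambda>n. ereal (real (card (A \<inter> canon B ` {1..n})) / real n))"

definition bounded_displacement :: "nat \<Rightarrow> (nat \<Rightarrow> nat) \<Rightarrow> nat set \<Rightarrow> bool" where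
  "bounded_displacement M x L \<longleftrightarrow> (\<exists>n0. \<forall>n\<ge>n0. n \<ge> 1 \<longrightarrow> sigma (x n) L \<le> M * n)"

definition noisy_enum :: "(nat \<Rightarrow> nat) \<Rightarrow> nat set \<Rightarrow> bool" where
  "noisy_enum x L \<longleftrightarrow> inj_on x {1..} \<and> L \<subseteq> x ` {1..} \<and>
     (\<lambda>n. real (card {t\<in>{1..n}. x t \<notin> L}) / real n) \<longlonglongrightarrow> 0"

definition prefix :: "(nat \<Rightarrow> nat) \<Rightarrow> nat \<Rightarrow> nat list" where
  "prefix x n = map x [1..<Suc n]"

definition set_generator :: "(nat list \<Rightarrow> nat set) \<Rightarrow> bool" where
  "set_generator G \<longleftrightarrow> (\<forall>xs. G xs \<inter> set xs = {})"

definition generates_in_limit :: "(nat list \<Rightarrow> nat set) \<Rightarrow> (nat \<Rightarrow> nat) \<Rightarrow> nat set \<Rightarrow> bool" where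
  "generates_in_limit G x K \<longleftrightarrow> (\<exists>n0. \<forall>n\<ge>n0. G (prefix x n) \<subseteq> K)"

definition upper_density :: "(nat list \<Rightarrow> nat set) \<Rightarrow> (nat \<Rightarrow> nat) \<Rightarrow> nat set \<Rightarrow> ereal" where
  "upper_density G x K = limsup (\<lambda>n. mu_low (G (prefix x n)) K)"

end

theory Submission
  imports Defs "HOL-Library.Discrete_Functions" "HOL-Real_Asymp.Real_Asymp"
begin

(* Take L1 = \<nat> and L2 = M\<nat>. Enumerate \<nat> so that the non-multiples of M appear, in increasing
   order, only at the square times s\<^sup>2, while the multiples of M fill all other times in increasing
   order. Then x t < M t, which gives M-bounded displacement with respect to every language, and
   only about \<surd>n of the first n elements lie outside L2, so x is an o(1)-noisy enumeration of both
   languages. A generator that generates in the limit from L2 eventually outputs only multiples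
   of M, and these have lower density at most 1/M in \<nat>; so its upper density for the target L1
   is at most 1/M. *)

lemma enumerate_UNIV_nat: "enumerate (UNIV :: nat set) n = n"
  by (induction n) (auto simp: enumerate_0 enumerate_Suc'' intro!: Least_equality)

lemma canon_UNIV_image: "canon UNIV ` {1..n} = {..<n}"
  by (force simp: canon_def enumerate_UNIV_nat image_iff intro: bexI[where x = "Suc _"])

lemma sigma_enumerate:
  assumes "infinite L"
  shows "sigma (enumerate L i) L = Suc i"
proof -
  have "(THE j. j \<ge> 1 \<and> canon L j = enumerate L i) = Suc i"
    by (rule the_equality) (auto simp: canon_def inj_eq[OF inj_enumerate[OF assms]])
  then show ?thesis
    using enumerate_in_set[OF assms] by (simp add: sigma_def)
qed

lemma sigma_le_Suc:
  assumes "infinite L"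
  shows "sigma y L \<le> Suc y"
proof (cases "y \<in> L")
  case True
  then obtain i where "enumerate L i = y"
    using enumerate_Ex[OF assms] by blast
  then show ?thesis
    using sigma_enumerate[OF assms] le_enumerate[OF assms, of i] by auto
qed (simp add: sigma_def)

lemma bounded_displacement_if_less:
  assumes "infinite L" and "\<And>t. t \<ge> 1 \<Longrightarrow> x t < M * t"
  shows "bounded_displacement M x L"
  unfolding bounded_displacement_def
  using sigma_le_Suc[OF assms(1)] assms(2) by (metis Suc_leI le_trans)

lemma card_multiples_lessThan_le:
  fixes M :: nat
  assumes "A \<subseteq> {y. M dvd y}"
  shows "card (A \<inter> {..<M * k}) \<le> k"
proof -
  have "A \<inter> {..<M * k} \<subseteq> (*) M ` {..<k}"
    using assms by (auto simp: image_iff dvd_def)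
  then have "card (A \<inter> {..<M * k}) \<le> card ((*) M ` {..<k})"
    by (intro card_mono) auto
  also have "\<dots> \<le> k"
    using card_image_le[of "{..<k}" "(*) M"] by simp
  finally show ?thesis .
qed

lemma mu_low_UNIV_multiples:
  assumes "A \<subseteq> {y. M dvd y}" and "M \<ge> 1"
  shows "mu_low A UNIV \<le> ereal (1 / real M)"
proof -
  define f where "f n = ereal (real (card (A \<inter> {..<n})) / real n)" for n
  have "mu_low A UNIV = liminf f"
    unfolding mu_low_def f_def canon_UNIV_image ..
  also have "\<dots> \<le> liminf (f \<circ> (\<lambda>k. M * Suc k))"
    using assms(2) by (intro liminf_subseq_mono) (simp add: strict_mono_Suc_iff)
  also have "\<dots> \<le> ereal (1 / real M)"
  proof (rule Liminf_le[OF sequentially_bot], intro always_eventually allI)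
    fix k
    have "real (card (A \<inter> {..<M * Suc k})) / real (M * Suc k) \<le> real (Suc k) / real (M * Suc k)"
      using card_multiples_lessThan_le[OF assms(1), of "Suc k"] by (intro divide_right_mono) auto
    also have "\<dots> = 1 / real M"
      unfolding of_nat_mult using assms(2) by (intro nonzero_divide_mult_cancel_right) simp
    finally show "(f \<circ> (\<lambda>k. M * Suc k)) k \<le> ereal (1 / real M)"
      by (simp add: f_def)
  qed
  finally show ?thesis .
qed

(* The positive non-multiples of M come in blocks of M - 1 between consecutive multiples;
   nonmultiple M j is the j-th of them, counting from 0. *)
definition nonmultiple :: "nat \<Rightarrow> nat \<Rightarrow> nat" where
  "nonmultiple M j = M * (j div (M - 1)) + j mod (M - 1) + 1"

lemma nonmultiple_div_mod:
  assumes "M \<ge> 2"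
  shows "nonmultiple M j mod M = j mod (M - 1) + 1" "nonmultiple M j div M = j div (M - 1)"
proof -
  define q r where "q = j div (M - 1)" and "r = j mod (M - 1) + 1"
  have "j mod (M - 1) < M - 1"
    using assms by simp
  then have "r < M"
    unfolding r_def by linarith
  moreover have "nonmultiple M j = r + M * q"
    by (simp add: nonmultiple_def q_def r_def)
  ultimately have "nonmultiple M j mod M = r" "nonmultiple M j div M = q"
    by simp_all
  then show "nonmultiple M j mod M = j mod (M - 1) + 1" "nonmultiple M j div M = j div (M - 1)"
    unfolding q_def r_def .
qed

lemma bij_betw_nonmultiple:
  assumes "M \<ge> 2"
  shows "bij_betw (nonmultiple M) UNIV {y. \<not> M dvd y}"
proof (rule bij_betw_byWitness[where f' = "\<lambda>y. y div M * (M - 1) + (y mod M - 1)"])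
  show "\<forall>j\<in>UNIV. nonmultiple M j div M * (M - 1) + (nonmultiple M j mod M - 1) = j"
    using assms by (simp add: nonmultiple_div_mod div_mult_mod_eq)
  show "nonmultiple M ` UNIV \<subseteq> {y. \<not> M dvd y}"
    using assms by (auto simp: dvd_eq_mod_eq_0 nonmultiple_div_mod)
  show "\<forall>y\<in>{y. \<not> M dvd y}. nonmultiple M (y div M * (M - 1) + (y mod M - 1)) = y"
  proof
    fix y assume "y \<in> {y. \<not> M dvd y}"
    then have "1 \<le> y mod M"
      by (auto simp: dvd_eq_mod_eq_0)
    moreover have "y mod M < M"
      using assms by simp
    ultimately have "y mod M - 1 < M - 1"
      by linarith
    then have "(y div M * (M - 1) + (y mod M - 1)) div (M - 1) = y div M"
      "(y div M * (M - 1) + (y mod M - 1)) mod (M - 1) = y mod M - 1"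
      by simp_all
    then show "nonmultiple M (y div M * (M - 1) + (y mod M - 1)) = y"
      using \<open>1 \<le> y mod M\<close> le_trans[OF \<open>1 \<le> y mod M\<close> mod_less_eq_dividend]
      by (simp add: nonmultiple_def)
  qed
qed simp

lemma nonmultiple_less:
  assumes "M \<ge> 2"
  shows "nonmultiple M j < M * Suc j"
proof -
  have "M * (j div (M - 1)) \<le> M * j"
    by (simp add: div_le_dividend)
  moreover have "j mod (M - 1) < M - 1"
    using assms by simp
  moreover have "M * Suc j = M * j + M"
    by simp
  ultimately show ?thesis
    unfolding nonmultiple_def by linarith
qed

lemma bij_betw_floor_sqrt_squares:
  "bij_betw (\<lambda>t. floor_sqrt t - 1) {t. 0 < t \<and> (floor_sqrt t)\<^sup>2 = t} UNIV"
  by (rule bij_betw_byWitness[where f' = "\<lambda>j. (Suc j)\<^sup>2"]) auto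

lemma nonsquare_bounds:
  assumes "(floor_sqrt t)\<^sup>2 \<noteq> t"
  shows "(floor_sqrt t)\<^sup>2 < t" "t \<le> (floor_sqrt t)\<^sup>2 + 2 * floor_sqrt t"
  using assms floor_sqrt_power2_le[of t] Suc_floor_sqrt_power2_gt[of t]
  by (simp_all add: power2_eq_square)

(* For a nonsquare t, t - floor_sqrt t - 1 is the number of nonsquares below t. *)
lemma strict_mono_on_nonsquare_index:
  "strict_mono_on {t. (floor_sqrt t)\<^sup>2 \<noteq> t} (\<lambda>t. t - floor_sqrt t - 1)"
proof (rule strict_mono_onI)
  fix t u assume t: "t \<in> {t. (floor_sqrt t)\<^sup>2 \<noteq> t}" and u: "u \<in> {t. (floor_sqrt t)\<^sup>2 \<noteq> t}"
    and "t < u"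
  define s r where "s = floor_sqrt t" and "r = floor_sqrt u"
  have t_bounds: "s\<^sup>2 < t" "t \<le> s\<^sup>2 + 2 * s"
    using nonsquare_bounds t unfolding s_def by auto
  have u_bounds: "r\<^sup>2 < u"
    using nonsquare_bounds u unfolding r_def by auto
  have "s \<le> s\<^sup>2" "r \<le> r\<^sup>2"
    by (simp_all add: power2_eq_square)
  moreover have "t + r < u + s"
  proof (cases "s = r")
    case False
    then have "s < r"
      using mono_floor_sqrt'[of t u] \<open>t < u\<close> unfolding s_def r_def by linarith
    then have "s * Suc s \<le> s * r" "Suc s * r \<le> r * r"
      by (simp_all only: Suc_le_eq[symmetric] mult_le_mono1 mult_le_mono2)
    then have "s\<^sup>2 + 2 * s + r \<le> r\<^sup>2 + s"
      by (simp add: power2_eq_square)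
    then show ?thesis
      using t_bounds u_bounds by linarith
  qed (use \<open>t < u\<close> in simp)
  ultimately show "t - floor_sqrt t - 1 < u - floor_sqrt u - 1"
    using t_bounds u_bounds unfolding s_def[symmetric] r_def[symmetric] by linarith
qed

lemma nonsquare_index_surj: "\<exists>t. (floor_sqrt t)\<^sup>2 \<noteq> t \<and> t - floor_sqrt t - 1 = k"
proof -
  define s where "s = floor_sqrt k"
  have "s * s \<le> k" "k < Suc s * Suc s"
    unfolding s_def using floor_sqrt_power2_le[of k] Suc_floor_sqrt_power2_gt[of k]
    by (simp_all add: power2_eq_square)
  then obtain m where m: "m * m \<le> k + m" "k + m < m * m + 2 * m"
    by (cases "k < s * s + s") (auto intro: that[of s] that[of "Suc s"])
  then have "m\<^sup>2 \<le> k + m + 1" "k + m + 1 < (Suc m)\<^sup>2"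
    by (simp_all add: power2_eq_square)
  then have "floor_sqrt (k + m + 1) = m"
    by (rule floor_sqrt_unique)
  moreover have "m\<^sup>2 \<noteq> k + m + 1"
    using m by (simp add: power2_eq_square)
  ultimately show ?thesis
    by (intro exI[of _ "k + m + 1"]) simp
qed

lemma bij_betw_nonsquare_index:
  "bij_betw (\<lambda>t. t - floor_sqrt t - 1) {t. (floor_sqrt t)\<^sup>2 \<noteq> t} UNIV"
  unfolding bij_betw_def
  using strict_mono_on_imp_inj_on[OF strict_mono_on_nonsquare_index] nonsquare_index_surj
  by (metis (mono_tags, lifting) UNIV_eq_I image_iff mem_Collect_eq)

definition square_interleaving :: "nat \<Rightarrow> nat \<Rightarrow> nat" where
  "square_interleaving M t =
    (if (floor_sqrt t)\<^sup>2 = t then nonmultiple M (floor_sqrt t - 1) else M * (t - floor_sqrt t - 1))"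

lemma bij_betw_mult_multiples:
  fixes M :: nat
  assumes "0 < M"
  shows "bij_betw ((*) M) UNIV {y. M dvd y}"
  unfolding bij_betw_def inj_on_def using assms by (auto simp: dvd_def)

lemma bij_betw_square_interleaving:
  assumes "M \<ge> 2"
  shows "bij_betw (square_interleaving M) {1..} UNIV"
proof -
  have "bij_betw (nonmultiple M \<circ> (\<lambda>t. floor_sqrt t - 1))
      {t. 0 < t \<and> (floor_sqrt t)\<^sup>2 = t} {y. \<not> M dvd y}"
    using bij_betw_floor_sqrt_squares bij_betw_nonmultiple[OF assms] by (rule bij_betw_trans)
  then have squares: "bij_betw (square_interleaving M)
      {t. 0 < t \<and> (floor_sqrt t)\<^sup>2 = t} {y. \<not> M dvd y}"
    by (rule bij_betw_cong[THEN iffD1, rotated]) (simp add: square_interleaving_def)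
  have "bij_betw ((*) M) UNIV {y. M dvd y}"
    using assms by (intro bij_betw_mult_multiples) simp
  with bij_betw_nonsquare_index
  have "bij_betw ((*) M \<circ> (\<lambda>t. t - floor_sqrt t - 1)) {t. (floor_sqrt t)\<^sup>2 \<noteq> t} {y. M dvd y}"
    by (rule bij_betw_trans)
  then have nonsquares: "bij_betw (square_interleaving M) {t. (floor_sqrt t)\<^sup>2 \<noteq> t} {y. M dvd y}"
    by (rule bij_betw_cong[THEN iffD1, rotated]) (simp add: square_interleaving_def)
  have "0 < t" if "(floor_sqrt t)\<^sup>2 \<noteq> t" for t
    using that by (cases t) auto
  then have "{1..} = {t. 0 < t \<and> (floor_sqrt t)\<^sup>2 = t} \<union> {t. (floor_sqrt t)\<^sup>2 \<noteq> t}"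
    by (auto simp: Suc_le_eq)
  moreover have "UNIV = {y. \<not> M dvd y} \<union> {y. M dvd y}"
    by blast
  ultimately show ?thesis
    using bij_betw_combine[OF squares nonsquares] by auto
qed

lemma square_interleaving_less:
  assumes "M \<ge> 2" and "t \<ge> 1"
  shows "square_interleaving M t < M * t"
proof (cases "(floor_sqrt t)\<^sup>2 = t")
  case True
  have "0 < floor_sqrt t"
    using assms(2) by simp
  then have "nonmultiple M (floor_sqrt t - 1) < M * floor_sqrt t"
    using nonmultiple_less[OF assms(1), of "floor_sqrt t - 1"] by simp
  also have "\<dots> \<le> M * t"
    using floor_sqrt_le[of t] by simp
  finally show ?thesis
    using True by (simp add: square_interleaving_def)
next
  case False
  then show ?thesis
    using assms by (simp add: square_interleaving_def)
qed

lemma card_positive_squares_le: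
  "card {t \<in> {1..n}. (floor_sqrt t)\<^sup>2 = t} \<le> floor_sqrt n"
proof -
  have "{t \<in> {1..n}. (floor_sqrt t)\<^sup>2 = t} \<subseteq> power2 ` {1..floor_sqrt n}"
  proof
    fix t assume t: "t \<in> {t \<in> {1..n}. (floor_sqrt t)\<^sup>2 = t}"
    then have "floor_sqrt t \<in> {1..floor_sqrt n}"
      using mono_floor_sqrt'[of t n] by (auto simp: Suc_le_eq)
    then show "t \<in> power2 ` {1..floor_sqrt n}"
      using t by (intro image_eqI[of _ _ "floor_sqrt t"]) auto
  qed
  then have "card {t \<in> {1..n}. (floor_sqrt t)\<^sup>2 = t} \<le> card (power2 ` {1..floor_sqrt n})"
    by (intro card_mono) auto
  also have "\<dots> \<le> floor_sqrt n"
    using card_image_le[of "{1..floor_sqrt n}" power2] by simp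
  finally show ?thesis .
qed

lemma square_interleaving_noise_vanishes:
  "(\<lambda>n. real (card {t \<in> {1..n}. \<not> M dvd square_interleaving M t}) / real n) \<longlonglongrightarrow> 0"
proof (rule tendsto_sandwich[of "\<lambda>n. 0" _ _ "\<lambda>n. sqrt (real n) / real n"])
  show "\<forall>\<^sub>F n in sequentially. real (card {t \<in> {1..n}. \<not> M dvd square_interleaving M t}) / real n
      \<le> sqrt (real n) / real n"
  proof (intro always_eventually allI divide_right_mono)
    fix n
    have "{t \<in> {1..n}. \<not> M dvd square_interleaving M t} \<subseteq> {t \<in> {1..n}. (floor_sqrt t)\<^sup>2 = t}"
      by (auto simp: square_interleaving_def)
    then have "card {t \<in> {1..n}. \<not> M dvd square_interleaving M t}
        \<le> card {t \<in> {1..n}. (floor_sqrt t)\<^sup>2 = t}"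
      by (intro card_mono) simp_all
    also have "\<dots> \<le> floor_sqrt n"
      by (rule card_positive_squares_le)
    finally have "card {t \<in> {1..n}. \<not> M dvd square_interleaving M t} \<le> floor_sqrt n" .
    moreover have "real (floor_sqrt n) \<le> sqrt (real n)"
      by (rule real_le_rsqrt) (metis floor_sqrt_power2_le of_nat_le_iff of_nat_power)
    ultimately show "real (card {t \<in> {1..n}. \<not> M dvd square_interleaving M t}) \<le> sqrt (real n)"
      by linarith
  qed simp
qed (simp_all, real_asymp)

lemma noisy_enum_if_bij_betw:
  assumes "bij_betw x {1..} UNIV"
    and "(\<lambda>n. real (card {t \<in> {1..n}. x t \<notin> K}) / real n) \<longlonglongrightarrow> 0"
  shows "noisy_enum x K"
  using assms unfolding noisy_enum_def bij_betw_def by simp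

lemma enumeration_with_sparse_nonmultiples_exists:
  assumes "M \<ge> 1"
  shows "\<exists>x. bij_betw x {1..} UNIV \<and> (\<forall>t\<ge>1. x t < M * t) \<and>
    (\<lambda>n. real (card {t \<in> {1..n}. \<not> M dvd x t}) / real n) \<longlonglongrightarrow> 0"
proof (cases "M = 1")
  case True
  have "bij_betw (\<lambda>t::nat. t - 1) {1..} UNIV"
    by (rule bij_betw_byWitness[where f' = Suc]) auto
  then show ?thesis
    using True by (intro exI[of _ "\<lambda>t. t - 1"]) simp
next
  case False
  with assms have "M \<ge> 2"
    by simp
  then show ?thesis
    using bij_betw_square_interleaving square_interleaving_less square_interleaving_noise_vanishes
    by blast
qed

lemma upper_density_UNIV_le_if_generates_multiples:
  assumes "M \<ge> 1" and "generates_in_limit G x {y. M dvd y}"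
  shows "upper_density G x UNIV \<le> ereal (1 / real M)"
proof -
  have "\<forall>\<^sub>F n in sequentially. G (prefix x n) \<subseteq> {y. M dvd y}"
    using assms(2) unfolding generates_in_limit_def eventually_sequentially .
  then have "\<forall>\<^sub>F n in sequentially. mu_low (G (prefix x n)) UNIV \<le> ereal (1 / real M)"
    by (rule eventually_mono) (rule mu_low_UNIV_multiples[OF _ assms(1)])
  then show ?thesis
    unfolding upper_density_def by (rule Limsup_bounded)
qed

theorem theorem7p10:
  fixes M :: nat
  assumes "M \<ge> 1"
  shows "\<exists>L1 L2 (x :: nat \<Rightarrow> nat).
    language L1 \<and> language L2 \<and>
    (\<forall>K\<in>{L1, L2}. bounded_displacement M x K \<and> noisy_enum x K) \<and>
    (\<forall>G. set_generator G \<and> (\<forall>K\<in>{L1, L2}. generates_in_limit G x K) \<longrightarrow>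
         (\<exists>K\<in>{L1, L2}. upper_density G x K \<le> ereal (1 / real M)))"
proof -
  obtain x where bij: "bij_betw x {1..} UNIV" and less: "\<forall>t\<ge>1. x t < M * t"
    and sparse: "(\<lambda>n. real (card {t \<in> {1..n}. \<not> M dvd x t}) / real n) \<longlonglongrightarrow> 0"
    using enumeration_with_sparse_nonmultiples_exists[OF assms] by blast
  define L2 where "L2 = {y. M dvd y}"
  have "infinite L2"
    using assms bij_betw_finite[OF bij_betw_mult_multiples[of M]] unfolding L2_def by simp
  have "noisy_enum x UNIV"
    using bij by (rule noisy_enum_if_bij_betw) simp
  moreover have "noisy_enum x L2"
    using bij sparse by (intro noisy_enum_if_bij_betw) (simp_all add: L2_def)
  moreover have "bounded_displacement M x K" if "infinite K" for K
    using bounded_displacement_if_less[OF that] less by blast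
  moreover have "upper_density G x UNIV \<le> ereal (1 / real M)" if "generates_in_limit G x L2" for G
    using upper_density_UNIV_le_if_generates_multiples[OF assms] that unfolding L2_def .
  ultimately show ?thesis
    using \<open>infinite L2\<close> unfolding language_def by blast
qed

end
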